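(* Let $L>0$ and assume there are continuous functions $f:[-L,L]\times[0,\infty)\to\mathbb{R}$, $g:[0,\infty)\to\mathbb{R}$ and a constant $K>0$ such that (i) $g(0)>0$, $g$ is strictly increasing, and with $G(s):=\int_K^sg(t)\,dt$ one has $\lim_{s\to\infty}s/\sqrt{G(s)}=0$; (ii) $f(x,s)\ge g(s)$ for all $s\ge K$, $x\in[-L,L]$. Let $\lambda_0=(\pi/L)^2$. Then: (a) there exists $A>0$ such that $f(x,s)\ge\lambda_0s-A$ for all $s\ge0$ and all $x\in[-L,L]$; (b) for every $R>K$, $$\int_0^R\frac{ds}{\sqrt{G(R)-G(s)}}\le\frac{2R}{\sqrt{G(R)}}.$$ *)

theory Defs
  imports "HOL-Analysis.Analysis"
begin

text \<open>Oriented primitive G(s) = integral from K to s of g (negative of the integral over [s,K] if s < K).\<close>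
definition primG :: "(real \<Rightarrow> real) \<Rightarrow> real \<Rightarrow> real \<Rightarrow> real" where
  "primG g K s = (LBINT t=ereal K..ereal s. g t)"

end

theory Submission
  imports Defs
begin

text \<open>
Since $g$ increases, $G(s) \<le> s\,g(s)$; together with $s/\sqrt{G(s)} \<to> 0$ this makes $g$ grow
faster than any linear function, so $f \<ge> g \<ge> \<lambda>_0 s$ for large $s$, while on the remaining
compact rectangle the continuous $f$ is bounded below. For (b), convexity of $G$ gives
$G(R) - G(s) \<ge> (R - s)\,G(R)/R$ on $[0,R]$, and $\int_0^R (R-s)^{-1/2}\,ds = 2\sqrt{R}$.
\<close>

lemma mono_on_integral_lower:
  fixes g :: "real \<Rightarrow> real"
  assumes "mono_on {a..b} g" "g integrable_on {a..b}" "a \<le> b"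
  shows "(b - a) * g a \<le> integral {a..b} g"
proof -
  have "integral {a..b} (\<lambda>_. g a) \<le> integral {a..b} g"
    using assms by (intro integral_le) (auto intro: mono_onD)
  then show ?thesis using assms(3) by simp
qed

lemma mono_on_integral_upper:
  fixes g :: "real \<Rightarrow> real"
  assumes "mono_on {a..b} g" "g integrable_on {a..b}" "a \<le> b"
  shows "integral {a..b} g \<le> (b - a) * g b"
proof -
  have "integral {a..b} g \<le> integral {a..b} (\<lambda>_. g b)"
    using assms by (intro integral_le) (auto intro: mono_onD)
  then show ?thesis using assms(3) by simp
qed

lemma nn_integral_inverse_sqrt:
  fixes c R :: real
  assumes c: "0 < c" and R: "0 \<le> R"
  shows "(\<integral>\<^sup>+ s\<in>{0..R}. ennreal (1 / sqrt (c * (R - s))) \<partial>lborel) = ennreal (2 * sqrt (R / c))"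
proof (rule nn_integral_has_integral_lebesgue')
  define F where "F = (\<lambda>s. - 2 / sqrt c * sqrt (R - s))"
  have "((\<lambda>s. 1 / sqrt (c * (R - s))) has_integral F R - F 0) {0..R}"
  proof (rule fundamental_theorem_of_calculus_interior)
    show "continuous_on {0..R} F"
      unfolding F_def by (intro continuous_intros)
    fix x assume x: "x \<in> {0<..<R}"
    have "(F has_real_derivative 1 / (sqrt c * sqrt (R - x))) (at x)"
      unfolding F_def using x c by (auto intro!: derivative_eq_intros simp: field_simps)
    then show "(F has_vector_derivative 1 / sqrt (c * (R - x))) (at x)"
      by (simp add: has_real_derivative_iff_has_vector_derivative real_sqrt_mult)
  qed (use R in simp)
  moreover have "F R - F 0 = 2 * sqrt (R / c)"
    by (simp add: F_def real_sqrt_divide)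
  ultimately show "((\<lambda>s. 1 / sqrt (c * (R - s))) has_integral 2 * sqrt (R / c)) {0..R}"
    by simp
qed (use c in simp)

lemma affine_lower_bound:
  fixes f :: "'a::topological_space \<Rightarrow> real \<Rightarrow> real"
  assumes X: "compact X"
    and cont: "continuous_on (X \<times> {0..}) (\<lambda>(x, s). f x s)"
    and ev: "eventually (\<lambda>s. \<forall>x\<in>X. c * s \<le> f x s) at_top"
  shows "\<exists>A>0. \<forall>s\<ge>0. \<forall>x\<in>X. c * s - A \<le> f x s"
proof -
  obtain S where S: "\<And>s x. S \<le> s \<Longrightarrow> x \<in> X \<Longrightarrow> c * s \<le> f x s"
    using ev unfolding eventually_at_top_linorder by blast
  have "compact ((\<lambda>(x, s). f x s) ` (X \<times> {0..S}))"
    using X by (intro compact_continuous_image compact_Times continuous_on_subset[OF cont]) auto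
  then obtain B where "\<forall>y\<in>(\<lambda>(x, s). f x s) ` (X \<times> {0..S}). \<bar>y\<bar> \<le> B"
    by (meson compact_imp_bounded bounded_real)
  then have B: "\<And>x s. x \<in> X \<Longrightarrow> s \<in> {0..S} \<Longrightarrow> \<bar>f x s\<bar> \<le> B"
    by auto
  define A where "A = \<bar>B\<bar> + \<bar>c\<bar> * \<bar>S\<bar> + 1"
  have A: "0 < A" unfolding A_def by (simp add: add_nonneg_pos)
  moreover have "c * s - A \<le> f x s" if s: "0 \<le> s" and x: "x \<in> X" for s x
  proof (cases "S \<le> s")
    case True
    then show ?thesis using S[OF True x] A by linarith
  next
    case False
    have "c * s \<le> \<bar>c\<bar> * s" using s by (simp add: mult_right_mono)
    also have "\<dots> \<le> \<bar>c\<bar> * \<bar>S\<bar>" using s False by (simp add: mult_left_mono)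
    finally show ?thesis using B[OF x] s False unfolding A_def by force
  qed
  ultimately show ?thesis by blast
qed

locale increasing_integrand =
  fixes g :: "real \<Rightarrow> real" and K :: real
  assumes cont: "continuous_on {0..} g"
    and mono: "mono_on {0..} g"
    and pos0: "0 < g 0"
    and K_nonneg: "0 \<le> K"
begin

abbreviation G :: "real \<Rightarrow> real" where "G \<equiv> primG g K"

lemma pos: "0 \<le> s \<Longrightarrow> 0 < g s"
  using pos0 mono_onD[OF mono, of 0 s] by simp

lemma integrable: "0 \<le> a \<Longrightarrow> g integrable_on {a..b}"
  by (intro integrable_continuous_real continuous_on_subset[OF cont]) auto

lemma G_eq_integral:
  assumes s: "0 \<le> s"
  shows "G s = integral {0..s} g - integral {0..K} g"
  unfolding primG_def
proof (rule interval_integral_FTC_finite)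
  show "continuous_on {min K s..max K s} g"
    using K_nonneg s by (intro continuous_on_subset[OF cont]) auto
  fix x assume x: "min K s \<le> x" "x \<le> max K s"
  have "((\<lambda>t. integral {0..t} g) has_vector_derivative g x) (at x within {0..max K s})"
    using x K_nonneg s by (intro integral_has_vector_derivative continuous_on_subset[OF cont]) auto
  then show "((\<lambda>t. integral {0..t} g) has_vector_derivative g x) (at x within {min K s..max K s})"
    by (rule has_vector_derivative_within_subset) (use K_nonneg s in auto)
qed

lemma G_diff:
  assumes "0 \<le> a" "a \<le> b"
  shows "G b - G a = integral {a..b} g"
  using Henstock_Kurzweil_Integration.integral_combine[OF assms integrable[OF order_refl]] assms
  by (simp add: G_eq_integral)

lemma G_diff_lower: "0 \<le> a \<Longrightarrow> a \<le> b \<Longrightarrow> (b - a) * g a \<le> G b - G a"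
  using mono_on_integral_lower[of a b g] mono_on_subset[OF mono] integrable
  by (simp add: G_diff subset_iff)

lemma G_diff_upper: "0 \<le> a \<Longrightarrow> a \<le> b \<Longrightarrow> G b - G a \<le> (b - a) * g b"
  using mono_on_integral_upper[of a b g] mono_on_subset[OF mono] integrable
  by (simp add: G_diff subset_iff)

lemma G_le:
  assumes s: "0 \<le> s"
  shows "G s \<le> s * g s"
proof -
  have GK: "G K = 0" by (simp add: G_eq_integral K_nonneg)
  have gs: "0 < g s" using pos[OF s] .
  show ?thesis
  proof (cases "K \<le> s")
    case True
    have "G s \<le> (s - K) * g s" using G_diff_upper[OF K_nonneg True] GK by simp
    also have "\<dots> \<le> s * g s" using K_nonneg gs by (simp add: algebra_simps)
    finally show ?thesis .
  next
    case False
    have "0 \<le> (K - s) * g s" using False gs by simp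
    also have "\<dots> \<le> - G s" using G_diff_lower[OF s, of K] False GK by simp
    finally have "G s \<le> 0" by simp
    moreover have "0 \<le> s * g s" using s gs by simp
    ultimately show ?thesis by linarith
  qed
qed

lemma G_pos:
  assumes "K < R"
  shows "0 < G R"
proof -
  have "0 < (R - K) * g K" using assms pos[OF K_nonneg] by simp
  also have "\<dots> \<le> G R - G K" using G_diff_lower[OF K_nonneg] assms by simp
  finally show ?thesis by (simp add: G_eq_integral K_nonneg)
qed

text \<open>As $G$ is convex with $G\,0 \<le> 0$, on $[0,R]$ it stays below the line through the origin and $(R, G\,R)$.\<close>
lemma G_chord:
  assumes s: "0 \<le> s" "s \<le> R"
  shows "(R - s) * G R \<le> R * (G R - G s)"
proof -
  have "(R - s) * G s \<le> (R - s) * (s * g s)"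
    using G_le s by (simp add: mult_left_mono)
  also have "\<dots> = s * ((R - s) * g s)" by simp
  also have "\<dots> \<le> s * (G R - G s)"
    using G_diff_lower s by (simp add: mult_left_mono)
  finally show ?thesis by (simp add: algebra_simps)
qed

lemma g_superlinear:
  assumes lim: "((\<lambda>s. s / sqrt (G s)) \<longlongrightarrow> 0) at_top" and c: "0 < c"
  shows "eventually (\<lambda>s. c * s \<le> g s) at_top"
proof -
  have "eventually (\<lambda>s. s / sqrt (G s) < 1 / sqrt c) at_top"
    using order_tendstoD(2)[OF lim] c by simp
  moreover have "eventually (\<lambda>s. K < s) at_top"
    by (rule eventually_gt_at_top)
  ultimately show ?thesis
  proof eventually_elim
    case (elim s)
    have GS: "0 < G s" and s: "0 < s" using G_pos elim K_nonneg by auto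
    have "s * sqrt c < sqrt (G s)"
      using elim GS c by (simp add: field_simps)
    have "s * (c * s) = (s * sqrt c)^2"
      using c by (simp add: power_mult_distrib power2_eq_square)
    also have "\<dots> < (sqrt (G s))^2"
      using \<open>s * sqrt c < sqrt (G s)\<close> s c by (intro power_strict_mono) auto
    also have "\<dots> = G s" using GS by simp
    also have "\<dots> \<le> s * g s" using G_le s by simp
    finally have "s * (c * s) < s * g s" .
    then show ?case using s by simp
  qed
qed

lemma nn_integral_inverse_sqrt_G:
  assumes R: "K < R"
  shows "(\<integral>\<^sup>+ s\<in>{0..R}. ennreal (1 / sqrt (G R - G s)) \<partial>lborel) \<le> ennreal (2 * R / sqrt (G R))"
proof -
  define c where "c = G R / R"
  have GR: "0 < G R" and R0: "0 < R" using G_pos R K_nonneg by auto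
  have c: "0 < c" using GR R0 by (simp add: c_def)
  have "1 / sqrt (G R - G s) \<le> 1 / sqrt (c * (R - s))" if s: "s \<in> {0..R}" for s
  proof (cases "s = R")
    case False
    have "c * (R - s) \<le> G R - G s"
      using G_chord[of s R] s R0 by (simp add: c_def field_simps)
    moreover have "0 < c * (R - s)" using s c False by simp
    ultimately show ?thesis by (simp add: frac_le)
  qed simp
  then have "(\<integral>\<^sup>+ s\<in>{0..R}. ennreal (1 / sqrt (G R - G s)) \<partial>lborel)
      \<le> (\<integral>\<^sup>+ s\<in>{0..R}. ennreal (1 / sqrt (c * (R - s))) \<partial>lborel)"
    by (intro nn_integral_mono) (auto split: split_indicator intro!: ennreal_leI)
  also have "\<dots> = ennreal (2 * sqrt (R / c))"
    using nn_integral_inverse_sqrt c R0 by simp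
  also have "2 * sqrt (R / c) = 2 * R / sqrt (G R)"
    using R0 GR by (simp add: c_def real_sqrt_divide power2_eq_square[symmetric])
  finally show ?thesis .
qed

end

theorem mainTheorem12:
  fixes f :: "real \<Rightarrow> real \<Rightarrow> real" and g :: "real \<Rightarrow> real" and L K :: real
  assumes L: "L > 0" and K: "K > 0"
    and fcont: "continuous_on ({-L..L} \<times> {0..}) (\<lambda>(x, s). f x s)"
    and gcont: "continuous_on {0..} g"
    and g0: "g 0 > 0"
    and gmono: "strict_mono_on {0..} g"
    and glim: "((\<lambda>s. s / sqrt (primG g K s)) \<longlongrightarrow> 0) at_top"
    and fg: "\<And>x s. x \<in> {-L..L} \<Longrightarrow> s \<ge> K \<Longrightarrow> f x s \<ge> g s"
  shows "(\<exists>A>0. \<forall>s\<ge>0. \<forall>x\<in>{-L..L}. f x s \<ge> (pi / L)^2 * s - A)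
       \<and> (\<forall>R>K. (\<integral>\<^sup>+ s\<in>{0..R}. ennreal (1 / sqrt (primG g K R - primG g K s)) \<partial>lborel)
                  \<le> ennreal (2 * R / sqrt (primG g K R)))"
proof
  interpret increasing_integrand g K
    using gcont strict_mono_on_imp_mono_on[OF gmono] g0 K by unfold_locales auto
  have "0 < (pi / L)^2" using L by simp
  have "eventually (\<lambda>s. \<forall>x\<in>{-L..L}. (pi / L)^2 * s \<le> f x s) at_top"
    using g_superlinear[OF glim \<open>0 < (pi / L)^2\<close>] eventually_ge_at_top[of K]
    by eventually_elim (use fg in force)
  then show "\<exists>A>0. \<forall>s\<ge>0. \<forall>x\<in>{-L..L}. f x s \<ge> (pi / L)^2 * s - A"
    using affine_lower_bound[OF compact_Icc fcont] by blast
  show "\<forall>R>K. (\<integral>\<^sup>+ s\<in>{0..R}. ennreal (1 / sqrt (G R - G s)) \<partial>lborel) \<le> ennreal (2 * R / sqrt (G R))"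
    using nn_integral_inverse_sqrt_G by blast
qed

end
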